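(* Suppose $H$ is an $\alpha$-Erdős–Simonovits good graph for some $0\leq \alpha<1$, and let $H^*$ be formed by taking $s$ copies of $H$ and gluing them along an edge $f$ of $H$. Then there is a constant $C$ such that for all $n$, $$\mathrm{ex}(n, H) \leq \mathrm{ex}(n, H^* ) \leq C n^{1 + \alpha}.$$
   Context: A graph $H$ is $(\alpha, C, \beta)$-Erdős–Simonovits good if every $n$-vertex graph $G$ with $pn^2\geq Cn^{1 + \alpha}$ edges contains at least $\beta p^{\mathrm{e}(H)}n^{v(H)}$ copies of $H$; it is $\alpha$-Erdős–Simonovits good if this holds for some positive constants $C,\beta$. Gluing $s$ copies of $H$ along the edge $f$ means taking $s$ copies of $H$ that are pairwise vertex-disjoint except that the copies of the (labeled) edge $f$ are identified into a single edge, endpoint to corresponding endpoint. $\mathrm{ex}(n,H)$ is the Turán number. *)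

theory Defs
  imports "HOL-Analysis.Analysis" "HOL-Library.FuncSet"
begin

definition graph :: "'a set \<Rightarrow> 'a set set \<Rightarrow> bool" where
  "graph V E \<longleftrightarrow> finite V \<and> (\<forall>e\<in>E. \<exists>u v. u \<noteq> v \<and> u \<in> V \<and> v \<in> V \<and> e = {u, v})"

definition copies :: "'a set \<Rightarrow> 'a set set \<Rightarrow> nat \<Rightarrow> nat set set \<Rightarrow> nat" where
  "copies V E n EG = card {\<phi> \<in> V \<rightarrow>\<^sub>E {0..<n}. inj_on \<phi> V \<and> (\<forall>e\<in>E. \<phi> ` e \<in> EG)}"

definition free :: "'a set \<Rightarrow> 'a set set \<Rightarrow> nat \<Rightarrow> nat set set \<Rightarrow> bool" where
  "free V E n EG \<longleftrightarrow> \<not> (\<exists>\<phi>. inj_on \<phi> V \<and> \<phi> ` V \<subseteq> {0..<n} \<and> (\<forall>e\<in>E. \<phi> ` e \<in> EG))"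

definition ex :: "nat \<Rightarrow> 'a set \<Rightarrow> 'a set set \<Rightarrow> nat" where
  "ex n V E = Max {card EG | EG. graph {0..<n} EG \<and> free V E n EG}"

definition ES_good_const :: "real \<Rightarrow> real \<Rightarrow> real \<Rightarrow> 'a set \<Rightarrow> 'a set set \<Rightarrow> bool" where
  "ES_good_const \<alpha> C \<beta> V E \<longleftrightarrow>
     (\<forall>n EG. graph {0..<n} EG \<longrightarrow> real (card EG) \<ge> C * real n powr (1 + \<alpha>) \<longrightarrow>
        real (copies V E n EG) \<ge> \<beta> * (real (card EG) / real n ^ 2) ^ card E * real n ^ card V)"

definition ES_good :: "real \<Rightarrow> 'a set \<Rightarrow> 'a set set \<Rightarrow> bool" where
  "ES_good \<alpha> V E \<longleftrightarrow> (\<exists>C \<beta>. C > 0 \<and> \<beta> > 0 \<and> ES_good_const \<alpha> C \<beta> V E)"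

text \<open>Gluing s copies of H along the edge f: copy i of vertex v is (v,i),
  except that the endpoints of f are identified with their copies in copy 0.\<close>
definition gmap :: "'a set \<Rightarrow> nat \<Rightarrow> 'a \<Rightarrow> 'a \<times> nat" where
  "gmap f i v = (if v \<in> f then (v, 0) else (v, i))"

definition glueV :: "'a set \<Rightarrow> 'a set \<Rightarrow> nat \<Rightarrow> ('a \<times> nat) set" where
  "glueV V f s = {gmap f i v | v i. v \<in> V \<and> i < s}"

definition glueE :: "'a set set \<Rightarrow> 'a set \<Rightarrow> nat \<Rightarrow> ('a \<times> nat) set set" where
  "glueE E f s = {gmap f i ` e | e i. e \<in> E \<and> i < s}"

end

theory Submission
  imports Defs
begin

(* Every H-free graph is H*-free since H sits inside H*, which gives the first inequality.
   For the second, let G be H*-free and f = {a, b}. For vertices x, y, greedily collect copies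
   of H with a, b mapped to x, y whose remaining vertices are pairwise disjoint: fewer than s
   fit, since s of them glue to a copy of H*, so the at most s |V(H)| vertices they use form a
   set T x y meeting every such copy off {x, y}. Now choose a vertex set S and keep an edge g
   of G only if g is inside S and S avoids the vertices T attaches to g. The kept graph is
   H-free (isolated vertices of H can first be moved off those vertices), so by
   Erdos-Simonovits goodness it has at most C n^(1+alpha) edges; averaging over all S, each
   edge is kept for a 2^-(4 s |V(H)| + 2) fraction of them. *)

lemma graph_finite: "graph V E \<Longrightarrow> finite V"
  by (simp add: graph_def)

lemma graph_edgeE:
  assumes "graph V E" "e \<in> E"
  obtains u v where "u \<noteq> v" "u \<in> V" "v \<in> V" "e = {u, v}"
  using assms unfolding graph_def by blast

lemma graph_edge_subset: "graph V E \<Longrightarrow> e \<in> E \<Longrightarrow> e \<subseteq> V"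
  by (elim graph_edgeE) auto

lemma graph_subset: "graph V E \<Longrightarrow> E' \<subseteq> E \<Longrightarrow> graph V E'"
  unfolding graph_def by blast

lemma graph_finite_edges:
  assumes "graph {0..<n} EG"
  shows "finite EG" and "card EG \<le> n ^ 2"
proof -
  have sub: "EG \<subseteq> (\<lambda>(u, v). {u, v}) ` ({0..<n} \<times> {0..<n})"
    using assms unfolding graph_def by fastforce
  then show "finite EG"
    by (rule finite_subset) simp
  have "card EG \<le> card ((\<lambda>(u, v). {u, v}) ` ({0..<n} \<times> {0..<n}))"
    using sub by (intro card_mono) auto
  also have "\<dots> \<le> card ({0..<n} \<times> {0..<n})"
    by (rule card_image_le) simp
  finally show "card EG \<le> n ^ 2"
    by (simp add: power2_eq_square)
qed

definition embedding :: "'a set \<Rightarrow> 'a set set \<Rightarrow> nat \<Rightarrow> nat set set \<Rightarrow> ('a \<Rightarrow> nat) \<Rightarrow> bool" where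
  "embedding V E n EG \<phi> \<longleftrightarrow> inj_on \<phi> V \<and> \<phi> ` V \<subseteq> {0..<n} \<and> (\<forall>e\<in>E. \<phi> ` e \<in> EG)"

lemma free_iff_no_embedding: "free V E n EG \<longleftrightarrow> (\<nexists>\<phi>. embedding V E n EG \<phi>)"
  by (simp add: free_def embedding_def)

lemma embedding_mono: "embedding V E n EG \<phi> \<Longrightarrow> EG \<subseteq> EG' \<Longrightarrow> embedding V E n EG' \<phi>"
  by (auto simp: embedding_def)

lemma embedding_if_copies_pos:
  assumes "copies V E n EG > 0"
  obtains \<phi> where "embedding V E n EG \<phi>"
proof -
  from assms obtain \<phi> where "\<phi> \<in> V \<rightarrow>\<^sub>E {0..<n}" "inj_on \<phi> V" "\<forall>e\<in>E. \<phi> ` e \<in> EG"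
    unfolding copies_def by (metis (no_types, lifting) card.empty empty_Collect_eq less_irrefl)
  then have "embedding V E n EG \<phi>"
    unfolding embedding_def by (auto simp: PiE_def Pi_def)
  then show thesis
    by (rule that)
qed

lemma free_if_subgraph_free:
  assumes "inj_on \<iota> V" "\<iota> ` V \<subseteq> V'" "\<forall>e\<in>E. \<iota> ` e \<in> E'" "free V E n EG"
  shows "free V' E' n EG"
proof -
  have "embedding V E n EG (\<psi> \<circ> \<iota>)" if "embedding V' E' n EG \<psi>" for \<psi>
    unfolding embedding_def
  proof (intro conjI ballI)
    show "inj_on (\<psi> \<circ> \<iota>) V"
      using that assms(1,2) unfolding embedding_def by (blast intro: comp_inj_on inj_on_subset)
    show "(\<psi> \<circ> \<iota>) ` V \<subseteq> {0..<n}"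
      using that assms(2) unfolding embedding_def image_comp[symmetric] by blast
    show "(\<psi> \<circ> \<iota>) ` e \<in> EG" if "e \<in> E" for e
      using \<open>embedding V' E' n EG \<psi>\<close> assms(3) that unfolding embedding_def image_comp[symmetric] by blast
  qed
  then show ?thesis
    using assms(4) by (auto simp: free_iff_no_embedding)
qed

lemma
  assumes "E \<noteq> {}"
  shows ex_attained: "\<exists>EG. graph {0..<n} EG \<and> free V E n EG \<and> ex n V E = card EG"
    and card_le_ex: "graph {0..<n} EG \<Longrightarrow> free V E n EG \<Longrightarrow> card EG \<le> ex n V E"
proof -
  let ?M = "{card G | G. graph {0..<n} G \<and> free V E n G}"
  have fin: "finite ?M"
    by (rule finite_subset[of _ "{..n^2}"]) (auto dest: graph_finite_edges(2))
  have "graph {0..<n} {}" "free V E n {}"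
    using assms by (auto simp: graph_def free_def)
  then have "?M \<noteq> {}"
    by blast
  with fin have "ex n V E \<in> ?M"
    unfolding ex_def by (rule Max_in)
  moreover have "m \<le> ex n V E" if "m \<in> ?M" for m
    unfolding ex_def using fin that by (rule Max_ge)
  ultimately show "\<exists>EG. graph {0..<n} EG \<and> free V E n EG \<and> ex n V E = card EG"
    and "graph {0..<n} EG \<Longrightarrow> free V E n EG \<Longrightarrow> card EG \<le> ex n V E"
    by blast+
qed

lemma ex_le_ex_if_subgraph:
  assumes "inj_on \<iota> V" "\<iota> ` V \<subseteq> V'" "\<forall>e\<in>E. \<iota> ` e \<in> E'" "E \<noteq> {}"
  shows "ex n V E \<le> ex n V' E'"
proof -
  obtain EG where "graph {0..<n} EG" "free V E n EG" "ex n V E = card EG"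
    using ex_attained[OF assms(4)] by blast
  moreover have "E' \<noteq> {}"
    using assms(3,4) by blast
  ultimately show ?thesis
    using card_le_ex free_if_subgraph_free[OF assms(1-3)] by metis
qed

lemma card_edges_le_if_free:
  assumes "ES_good_const \<alpha> C \<beta> V E" "\<beta> > 0" "C \<ge> 0"
    and "graph {0..<n} EG" "free V E n EG"
  shows "real (card EG) \<le> C * real n powr (1 + \<alpha>)"
proof (rule ccontr)
  assume "\<not> ?thesis"
  moreover have "C * real n powr (1 + \<alpha>) \<ge> 0"
    using assms(3) by simp
  ultimately have many: "real (card EG) \<ge> C * real n powr (1 + \<alpha>)" and "card EG > 0"
    by linarith+
  moreover have "n > 0"
    using \<open>card EG > 0\<close> graph_finite_edges(2)[OF assms(4)] by (cases n) auto
  ultimately have "\<beta> * (real (card EG) / real n ^ 2) ^ card E * real n ^ card V > 0"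
    using assms(2) by simp
  also have "\<dots> \<le> real (copies V E n EG)"
    using assms(1,4) many unfolding ES_good_const_def by blast
  finally obtain \<phi> where "embedding V E n EG \<phi>"
    using embedding_if_copies_pos by (metis of_nat_0_less_iff)
  then show False
    using assms(5) by (auto simp: free_iff_no_embedding)
qed

lemma disjoint_family_or_hitting_set:
  assumes "\<And>x. P x \<Longrightarrow> finite (A x) \<and> card (A x) \<le> m"
  shows "(\<exists>F. (\<forall>i<k. P (F i)) \<and> disjoint_family_on (A \<circ> F) {..<k}) \<or>
         (\<exists>T. finite T \<and> card T \<le> k * m \<and> (\<forall>x. P x \<longrightarrow> A x \<inter> T \<noteq> {}))"
proof (induction k)
  case 0
  then show ?case
    by (auto simp: disjoint_family_on_def)
next
  case (Suc k)
  show ?case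
  proof (cases "\<exists>T. finite T \<and> card T \<le> k * m \<and> (\<forall>x. P x \<longrightarrow> A x \<inter> T \<noteq> {})")
    case True
    then show ?thesis
      by (meson le_trans mult_le_mono1 le_SucI order_refl)
  next
    case False
    with Suc.IH obtain F where F: "\<forall>i<k. P (F i)" "disjoint_family_on (A \<circ> F) {..<k}"
      by blast
    define T where "T = (\<Union>i<k. A (F i))"
    have "finite T"
      using F(1) assms unfolding T_def by auto
    moreover have "card T \<le> k * m"
    proof -
      have "card T \<le> (\<Sum>i<k. card (A (F i)))"
        unfolding T_def by (rule card_UN_le) simp
      also have "\<dots> \<le> (\<Sum>i<k. m)"
        using F(1) assms by (intro sum_mono) auto
      finally show ?thesis
        by simp
    qed
    ultimately obtain x where "P x" "A x \<inter> T = {}"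
      using False by blast
    then have "(\<forall>i<Suc k. P ((F(k := x)) i)) \<and> disjoint_family_on (A \<circ> F(k := x)) {..<Suc k}"
      using F unfolding T_def disjoint_family_on_def by (auto simp: less_Suc_eq) blast+
    then show ?thesis
      by blast
  qed
qed

lemma embedding_glue:
  assumes copies: "\<And>i. i < s \<Longrightarrow> embedding V E n EG (F i)"
    and agree: "\<And>i v. i < s \<Longrightarrow> v \<in> f \<Longrightarrow> F i v = F 0 v"
    and disj: "disjoint_family_on (\<lambda>i. F i ` (V - f)) {..<s}"
  shows "embedding (glueV V f s) (glueE E f s) n EG (\<lambda>(v, i). F i v)"
  unfolding embedding_def
proof (intro conjI ballI)
  let ?\<psi> = "\<lambda>(v, i). F i v"
  have \<psi>_gmap: "?\<psi> (gmap f i v) = F i v" if "i < s" for i v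
    using agree[OF that] by (simp add: gmap_def)
  have inj: "inj_on (F i) V" and range: "F i ` V \<subseteq> {0..<n}" and edges: "\<forall>e\<in>E. F i ` e \<in> EG"
    if "i < s" for i
    using copies[OF that] by (auto simp: embedding_def)
  show "inj_on ?\<psi> (glueV V f s)"
  proof (rule inj_onI)
    fix p q assume "p \<in> glueV V f s" "q \<in> glueV V f s" and eq: "?\<psi> p = ?\<psi> q"
    then obtain v i w j where p: "p = gmap f i v" "v \<in> V" "i < s"
      and q: "q = gmap f j w" "w \<in> V" "j < s"
      unfolding glueV_def by blast
    have Fij: "F i v = F j w"
      using eq p q \<psi>_gmap by simp
    consider "v \<in> f" | "w \<in> f" | "i = j" | "v \<notin> f" "w \<notin> f" "i \<noteq> j"
      by blast
    then show "p = q"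
    proof cases
      case 1
      then have "F j v = F j w"
        using Fij agree p(3) q(3) by metis
      then have "v = w"
        using inj[OF q(3)] p(2) q(2) by (auto dest: inj_onD)
      then show ?thesis
        using 1 p q by (simp add: gmap_def)
    next
      case 2
      then have "F i v = F i w"
        using Fij agree p(3) q(3) by metis
      then have "v = w"
        using inj[OF p(3)] p(2) q(2) by (auto dest: inj_onD)
      then show ?thesis
        using 2 p q by (simp add: gmap_def)
    next
      case 3
      then have "v = w"
        using Fij inj[OF p(3)] p(2) q(2) by (auto dest: inj_onD)
      then show ?thesis
        using 3 p q by simp
    next
      case 4
      have "F i v \<in> F i ` (V - f)"
        using p(2) 4 by blast
      moreover have "F i v \<in> F j ` (V - f)"
        unfolding Fij using q(2) 4 by blast
      ultimately show ?thesis
        using disj 4(3) p(3) q(3) unfolding disjoint_family_on_def by blast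
    qed
  qed
  show "?\<psi> ` glueV V f s \<subseteq> {0..<n}"
  proof
    fix y assume "y \<in> ?\<psi> ` glueV V f s"
    then obtain v i where "y = ?\<psi> (gmap f i v)" "v \<in> V" "i < s"
      unfolding glueV_def by blast
    then show "y \<in> {0..<n}"
      using range \<psi>_gmap by (auto simp: image_subset_iff)
  qed
  show "?\<psi> ` e' \<in> EG" if e': "e' \<in> glueE E f s" for e'
  proof -
    obtain e i where "e' = gmap f i ` e" "e \<in> E" "i < s"
      using e' unfolding glueE_def by blast
    moreover from this have "?\<psi> ` e' = F i ` e"
      using \<psi>_gmap by (simp add: image_image)
    ultimately show ?thesis
      using edges by simp
  qed
qed

lemma inj_on_modify_avoiding:
  assumes inj: "inj_on \<phi> V" and range: "\<phi> ` V \<subseteq> N" and "finite N" "finite V" "W \<subseteq> V"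
    and "finite X" and room: "card X + card V \<le> card N"
  obtains \<phi>' where "inj_on \<phi>' V" "\<phi>' ` V \<subseteq> N" "\<And>v. v \<in> V - W \<Longrightarrow> \<phi>' v = \<phi> v"
    "\<And>v. v \<in> W \<Longrightarrow> \<phi>' v \<notin> X"
proof -
  define R where "R = N - (X \<union> \<phi> ` (V - W))"
  have "card (X \<union> \<phi> ` (V - W)) \<le> card X + card (V - W)"
    by (meson card_Un_le card_image_le \<open>finite V\<close> finite_Diff le_trans add_le_mono order_refl)
  moreover have "card (V - W) + card W = card V"
    using \<open>W \<subseteq> V\<close> \<open>finite V\<close> by (metis card_Diff_subset card_mono finite_subset le_add_diff_inverse2)
  moreover have "card N - card (X \<union> \<phi> ` (V - W)) \<le> card R"
    unfolding R_def by (rule diff_card_le_card_Diff) (use \<open>finite X\<close> \<open>finite V\<close> in simp)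
  ultimately have "card W \<le> card R"
    using room by linarith
  moreover have "finite W"
    using \<open>finite V\<close> \<open>W \<subseteq> V\<close> by (rule finite_subset[rotated])
  ultimately obtain h where h: "h ` W \<subseteq> R" "inj_on h W"
    using card_le_inj \<open>finite N\<close> unfolding R_def by blast
  define \<phi>' where "\<phi>' v = (if v \<in> W then h v else \<phi> v)" for v
  show thesis
  proof
    show "inj_on \<phi>' V"
    proof (rule inj_onI)
      fix u v assume uv: "u \<in> V" "v \<in> V" "\<phi>' u = \<phi>' v"
      show "u = v"
        using uv h inj unfolding \<phi>'_def R_def
        by (cases "u \<in> W"; cases "v \<in> W") (auto dest: inj_onD)
    qed
    show "\<phi>' ` V \<subseteq> N"
      using h range unfolding \<phi>'_def R_def by auto
    show "\<phi>' v = \<phi> v" if "v \<in> V - W" for v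
      using that unfolding \<phi>'_def by simp
    show "\<phi>' v \<notin> X" if "v \<in> W" for v
      using that h unfolding \<phi>'_def R_def by auto
  qed
qed

lemma card_subsets_between:
  assumes "finite U" "A \<subseteq> U" "B \<subseteq> U" "A \<inter> B = {}"
  shows "card {S \<in> Pow U. A \<subseteq> S \<and> S \<inter> B = {}} = 2 ^ (card U - card A - card B)"
proof -
  have "{S \<in> Pow U. A \<subseteq> S \<and> S \<inter> B = {}} = (\<lambda>X. X \<union> A) ` Pow (U - A - B)"
    using assms(2,4) by (auto intro!: image_eqI[where x = "_ - A"])
  moreover have "inj_on (\<lambda>X. X \<union> A) (Pow (U - A - B))"
    by (rule inj_onI) blast
  moreover have "card (U - A - B) = card U - card A - card B"
  proof -
    have "finite A" "finite B"
      using assms finite_subset by blast+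
    moreover have "U - A - B = U - (A \<union> B)"
      by blast
    ultimately show ?thesis
      using assms by (simp add: card_Diff_subset card_Un_disjoint)
  qed
  ultimately show ?thesis
    using assms(1) by (simp add: card_image card_Pow)
qed

lemma card_le_by_subset_averaging:
  fixes B :: real and T :: "'a set \<Rightarrow> 'a set"
  assumes "finite U" "finite G"
    and fits: "\<And>g. g \<in> G \<Longrightarrow> g \<subseteq> U \<and> T g \<subseteq> U \<and> g \<inter> T g = {} \<and> card g + card (T g) \<le> r"
    and sparse: "\<And>S. S \<subseteq> U \<Longrightarrow> real (card {g \<in> G. g \<subseteq> S \<and> S \<inter> T g = {}}) \<le> B"
  shows "real (card G) \<le> 2 ^ r * B"
proof -
  let ?good = "\<lambda>g S. g \<subseteq> S \<and> S \<inter> T g = {}"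
  have "real (card {g \<in> G. ?good g {}}) \<le> B"
    by (rule sparse) simp
  then have "B \<ge> 0"
    by (rule order_trans[OF of_nat_0_le_iff])
  have many: "2 ^ (card U - r) \<le> card {S \<in> Pow U. ?good g S}" if "g \<in> G" for g
  proof -
    have "card {S \<in> Pow U. ?good g S} = 2 ^ (card U - card g - card (T g))"
      using fits[OF that] by (intro card_subsets_between[OF \<open>finite U\<close>]) auto
    moreover have "card U - r \<le> card U - card g - card (T g)"
      using fits[OF that] by linarith
    ultimately show ?thesis
      by (simp add: power_increasing)
  qed
  have "card G * 2 ^ (card U - r) = (\<Sum>g\<in>G. 2 ^ (card U - r))"
    by simp
  also have "\<dots> \<le> (\<Sum>g\<in>G. card {S \<in> Pow U. ?good g S})"
    by (rule sum_mono) (rule many)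
  also have "\<dots> = (\<Sum>g\<in>G. \<Sum>S\<in>Pow U. if ?good g S then 1 else 0)"
    using \<open>finite U\<close> by (simp add: sum.inter_filter[symmetric])
  also have "\<dots> = (\<Sum>S\<in>Pow U. \<Sum>g\<in>G. if ?good g S then 1 else 0)"
    by (rule sum.swap)
  also have "\<dots> = (\<Sum>S\<in>Pow U. card {g \<in> G. ?good g S})"
    using \<open>finite G\<close> by (simp add: sum.inter_filter[symmetric])
  finally have double_count: "card G * 2 ^ (card U - r) \<le> (\<Sum>S\<in>Pow U. card {g \<in> G. ?good g S})" .
  have "real (card G) * 2 ^ (card U - r) \<le> (\<Sum>S\<in>Pow U. real (card {g \<in> G. ?good g S}))"
    using of_nat_mono[OF double_count] by simp
  also have "\<dots> \<le> (\<Sum>S\<in>Pow U. B)"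
    by (rule sum_mono) (simp add: sparse)
  also have "\<dots> = 2 ^ card U * B"
    using \<open>finite U\<close> by (simp add: card_Pow)
  also have "\<dots> \<le> 2 ^ (card U - r + r) * B"
    using \<open>B \<ge> 0\<close> by (intro mult_right_mono power_increasing) auto
  also have "\<dots> = 2 ^ (card U - r) * (2 ^ r * B)"
    by (simp add: power_add)
  finally show ?thesis
    by simp
qed

lemma pair_hitting_sets:
  assumes "graph V E" "f = {a, b}" "free (glueV V f s) (glueE E f s) n EG"
  obtains T where "\<And>x y. finite (T x y) \<and> card (T x y) \<le> s * card V"
    and "\<And>\<phi>. embedding V E n EG \<phi> \<Longrightarrow> \<phi> ` (V - f) \<inter> T (\<phi> a) (\<phi> b) \<noteq> {}"
proof -
  define hits where "hits x y T \<longleftrightarrow> finite T \<and> card T \<le> s * card V \<and>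
      (\<forall>\<phi>. embedding V E n EG \<phi> \<and> \<phi> a = x \<and> \<phi> b = y \<longrightarrow> \<phi> ` (V - f) \<inter> T \<noteq> {})" for x y T
  have "\<exists>T. hits x y T" for x y
  proof -
    let ?P = "\<lambda>\<phi>. embedding V E n EG \<phi> \<and> \<phi> a = x \<and> \<phi> b = y"
    have "finite (\<phi> ` (V - f)) \<and> card (\<phi> ` (V - f)) \<le> card V" for \<phi> :: "'a \<Rightarrow> nat"
      using graph_finite[OF assms(1)] card_image_le[of "V - f" \<phi>] card_mono[of V "V - f"] by auto
    moreover have "\<nexists>F. (\<forall>i<s. ?P (F i)) \<and> disjoint_family_on ((\<lambda>\<phi>. \<phi> ` (V - f)) \<circ> F) {..<s}"
    proof
      assume "\<exists>F. (\<forall>i<s. ?P (F i)) \<and> disjoint_family_on ((\<lambda>\<phi>. \<phi> ` (V - f)) \<circ> F) {..<s}"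
      then obtain F where "\<forall>i<s. ?P (F i)" "disjoint_family_on (\<lambda>i. F i ` (V - f)) {..<s}"
        by (auto simp: comp_def)
      then have "embedding (glueV V f s) (glueE E f s) n EG (\<lambda>(v, i). F i v)"
        by (intro embedding_glue) (auto simp: assms(2))
      then show False
        using assms(3) by (auto simp: free_iff_no_embedding)
    qed
    ultimately obtain T where "finite T" "card T \<le> s * card V" "\<forall>\<phi>. ?P \<phi> \<longrightarrow> \<phi> ` (V - f) \<inter> T \<noteq> {}"
      using disjoint_family_or_hitting_set[of ?P "\<lambda>\<phi>. \<phi> ` (V - f)" "card V" s] by auto
    then show ?thesis
      unfolding hits_def by blast
  qed
  then have "hits x y (SOME T. hits x y T)" for x y
    by (rule someI_ex)
  then show thesis
    by (intro that[of "\<lambda>x y. SOME T. hits x y T"]) (auto simp: hits_def)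
qed

definition forbidden :: "(nat \<Rightarrow> nat \<Rightarrow> nat set) \<Rightarrow> nat \<Rightarrow> nat set \<Rightarrow> nat set" where
  "forbidden T n g = (\<Union>x\<in>g. \<Union>y\<in>g. T x y) \<inter> {0..<n} - g"

lemma card_forbidden_le:
  assumes "finite g" "\<And>x y. finite (T x y) \<and> card (T x y) \<le> m"
  shows "card (forbidden T n g) \<le> card g ^ 2 * m"
proof -
  have "card (\<Union>x\<in>g. \<Union>y\<in>g. T x y) \<le> (\<Sum>x\<in>g. card (\<Union>y\<in>g. T x y))"
    using assms(1) by (rule card_UN_le)
  also have "\<dots> \<le> (\<Sum>x\<in>g. \<Sum>y\<in>g. card (T x y))"
    using assms(1) by (intro sum_mono card_UN_le)
  also have "\<dots> \<le> (\<Sum>x\<in>g. \<Sum>y\<in>g. m)"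
    using assms(2) by (intro sum_mono) auto
  also have "\<dots> = card g ^ 2 * m"
    by (simp add: power2_eq_square)
  moreover have "card (forbidden T n g) \<le> card (\<Union>x\<in>g. \<Union>y\<in>g. T x y)"
    using assms by (intro card_mono) (auto simp: forbidden_def)
  ultimately show ?thesis
    by linarith
qed

lemma embedding_move_isolated:
  assumes "graph V E" "embedding V E n EG \<phi>" "finite X" "card X + card V \<le> n"
  obtains \<phi>' where "embedding V E n EG \<phi>'" "\<And>v. v \<in> \<Union>E \<Longrightarrow> \<phi>' v = \<phi> v"
    "\<And>v. v \<in> V - \<Union>E \<Longrightarrow> \<phi>' v \<notin> X"
proof -
  have "inj_on \<phi> V" "\<phi> ` V \<subseteq> {0..<n}" "finite V" "V - \<Union>E \<subseteq> V" "card X + card V \<le> card {0..<n}"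
    using assms(2,4) graph_finite[OF assms(1)] by (auto simp: embedding_def)
  then obtain \<phi>' where \<phi>': "inj_on \<phi>' V" "\<phi>' ` V \<subseteq> {0..<n}"
    "\<And>v. v \<in> V - (V - \<Union>E) \<Longrightarrow> \<phi>' v = \<phi> v" "\<And>v. v \<in> V - \<Union>E \<Longrightarrow> \<phi>' v \<notin> X"
    by (rule inj_on_modify_avoiding[OF _ _ finite_atLeastLessThan _ _ assms(3)]) blast
  have agree: "\<phi>' v = \<phi> v" if "v \<in> \<Union>E" for v
    using that graph_edge_subset[OF assms(1)] \<phi>'(3) by blast
  then have "\<phi>' ` e = \<phi> ` e" if "e \<in> E" for e
    using that by (intro image_cong refl) blast
  then have "embedding V E n EG \<phi>'"
    using \<phi>'(1,2) assms(2) by (auto simp: embedding_def)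
  then show thesis
    using that agree \<phi>'(4) by blast
qed

lemma free_sparsified:
  assumes "graph V E" "f \<in> E" "f = {a, b}"
    and hit: "\<And>\<phi>. embedding V E n EG \<phi> \<Longrightarrow> \<phi> ` (V - f) \<inter> T (\<phi> a) (\<phi> b) \<noteq> {}"
    and room: "\<And>g. g \<in> EG \<Longrightarrow> card (forbidden T n g) + card V \<le> n"
  shows "free V E n {g \<in> EG. g \<subseteq> S \<and> S \<inter> forbidden T n g = {}}"
proof -
  let ?G = "{g \<in> EG. g \<subseteq> S \<and> S \<inter> forbidden T n g = {}}"
  have False if \<phi>: "embedding V E n ?G \<phi>" for \<phi>
  proof -
    let ?X = "forbidden T n (\<phi> ` f)"
    have "\<phi> ` f \<in> EG" "S \<inter> ?X = {}"
      using \<phi> \<open>f \<in> E\<close> by (auto simp: embedding_def)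
    moreover have "finite ?X"
      by (simp add: forbidden_def)
    ultimately obtain \<phi>' where \<phi>': "embedding V E n ?G \<phi>'" "\<And>v. v \<in> \<Union>E \<Longrightarrow> \<phi>' v = \<phi> v"
      "\<And>v. v \<in> V - \<Union>E \<Longrightarrow> \<phi>' v \<notin> ?X"
      using embedding_move_isolated[OF assms(1) \<phi>] room by blast
    have "a \<in> \<Union>E" "b \<in> \<Union>E"
      using \<open>f \<in> E\<close> assms(3) by auto
    then have "\<phi>' a = \<phi> a" "\<phi>' b = \<phi> b"
      using \<phi>'(2) by blast+
    moreover have "embedding V E n EG \<phi>'"
      using \<phi>'(1) by (rule embedding_mono) blast
    ultimately obtain v where v: "v \<in> V - f" "\<phi>' v \<in> T (\<phi> a) (\<phi> b)"
      using hit[of \<phi>'] by auto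
    moreover have "\<phi>' v \<notin> \<phi>' ` f" "\<phi>' v \<in> {0..<n}"
      using v(1) \<phi>'(1) graph_edge_subset[OF assms(1,2)] by (auto simp: embedding_def inj_on_eq_iff)
    moreover have "\<phi>' ` f = \<phi> ` f"
      using \<phi>'(2) \<open>f \<in> E\<close> by (intro image_cong refl) blast
    ultimately have "\<phi>' v \<in> ?X"
      using assms(3) unfolding forbidden_def by auto
    show False
    proof (cases "v \<in> \<Union>E")
      case True
      then obtain e where "e \<in> E" "v \<in> e"
        by blast
      then have "\<phi>' v \<in> S"
        using \<phi>'(1) unfolding embedding_def by blast
      then show False
        using \<open>S \<inter> ?X = {}\<close> \<open>\<phi>' v \<in> ?X\<close> by blast
    next
      case False
      then show False
        using \<phi>'(3) v(1) \<open>\<phi>' v \<in> ?X\<close> by blast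
    qed
  qed
  then show ?thesis
    by (auto simp: free_iff_no_embedding)
qed

lemma card_edges_le_if_glue_free:
  assumes "graph V E" "f \<in> E" "ES_good_const \<alpha> C \<beta> V E" "\<beta> > 0" "C \<ge> 0"
    and "graph {0..<n} EG" "free (glueV V f s) (glueE E f s) n EG"
    and large: "n \<ge> (4 * s + 1) * card V"
  shows "real (card EG) \<le> 2 ^ (4 * s * card V + 2) * (C * real n powr (1 + \<alpha>))"
proof -
  obtain a b where "f = {a, b}"
    using graph_edgeE[OF assms(1,2)] by metis
  then obtain T where T: "\<And>x y. finite (T x y) \<and> card (T x y) \<le> s * card V"
    and hit: "\<And>\<phi>. embedding V E n EG \<phi> \<Longrightarrow> \<phi> ` (V - f) \<inter> T (\<phi> a) (\<phi> b) \<noteq> {}"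
    using pair_hitting_sets[OF assms(1) _ assms(7)] by blast
  have edge: "finite g \<and> card g = 2 \<and> g \<subseteq> {0..<n}" if "g \<in> EG" for g
    by (rule graph_edgeE[OF assms(6) that]) auto
  have card_forbidden: "card (forbidden T n g) \<le> 4 * s * card V" if "g \<in> EG" for g
    using card_forbidden_le[of g T "s * card V" n] edge[OF that] T by simp
  show ?thesis
  proof (rule card_le_by_subset_averaging)
    show "finite {0..<n}" "finite EG"
      using graph_finite_edges(1)[OF assms(6)] by auto
    show "g \<subseteq> {0..<n} \<and> forbidden T n g \<subseteq> {0..<n} \<and> g \<inter> forbidden T n g = {} \<and>
        card g + card (forbidden T n g) \<le> 4 * s * card V + 2" if "g \<in> EG" for g
      using edge[OF that] card_forbidden[OF that] by (auto simp: forbidden_def)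
    show "real (card {g \<in> EG. g \<subseteq> S \<and> S \<inter> forbidden T n g = {}}) \<le> C * real n powr (1 + \<alpha>)" for S
    proof (rule card_edges_le_if_free[OF assms(3-5)])
      show "graph {0..<n} {g \<in> EG. g \<subseteq> S \<and> S \<inter> forbidden T n g = {}}"
        using assms(6) by (rule graph_subset) blast
      show "free V E n {g \<in> EG. g \<subseteq> S \<and> S \<inter> forbidden T n g = {}}"
        using assms(1,2) \<open>f = {a, b}\<close> hit
      proof (rule free_sparsified)
        show "card (forbidden T n g) + card V \<le> n" if "g \<in> EG" for g
          using card_forbidden[OF that] large by (simp add: algebra_simps)
      qed
    qed
  qed
qed

lemma square_le_mult_powr:
  assumes "real n \<le> N" "0 \<le> \<alpha>"
  shows "real n ^ 2 \<le> N * real n powr (1 + \<alpha>)"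
proof (cases "n = 0")
  case False
  have "real n = real n powr 1"
    by simp
  also have "\<dots> \<le> real n powr (1 + \<alpha>)"
    using False assms(2) by (intro powr_mono) auto
  finally have "real n \<le> real n powr (1 + \<alpha>)" .
  then show ?thesis
    using assms(1) by (simp add: power2_eq_square mult_mono)
qed simp

lemma ex_glue_le_powr:
  assumes "graph V E" "ES_good \<alpha> V E" "0 \<le> \<alpha>" "f \<in> E" "s \<ge> 1"
  shows "\<exists>C. \<forall>n. real (ex n (glueV V f s) (glueE E f s)) \<le> C * real n powr (1 + \<alpha>)"
proof -
  obtain C \<beta> where "C > 0" "\<beta> > 0" "ES_good_const \<alpha> C \<beta> V E"
    using assms(2) unfolding ES_good_def by blast
  define N where "N = (4 * s + 1) * card V"
  define K where "K = 2 ^ (4 * s * card V + 2) * C"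
  have "gmap f 0 ` f \<in> glueE E f s"
    using assms(4,5) unfolding glueE_def by fastforce
  then have "glueE E f s \<noteq> {}"
    by blast
  have "real (ex n (glueV V f s) (glueE E f s)) \<le> (real N + K) * real n powr (1 + \<alpha>)" for n
  proof -
    obtain EG where EG: "graph {0..<n} EG" "free (glueV V f s) (glueE E f s) n EG"
      "ex n (glueV V f s) (glueE E f s) = card EG"
      using ex_attained[OF \<open>glueE E f s \<noteq> {}\<close>] by blast
    have "real (card EG) \<le> K * real n powr (1 + \<alpha>)" if "n \<ge> N"
      using card_edges_le_if_glue_free[OF assms(1,4) \<open>ES_good_const \<alpha> C \<beta> V E\<close> \<open>\<beta> > 0\<close> _ EG(1,2)]
        that \<open>C > 0\<close> unfolding N_def K_def by (simp add: mult.assoc)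
    moreover have "real (card EG) \<le> real N * real n powr (1 + \<alpha>)" if "n < N"
    proof -
      have "real (card EG) \<le> real n ^ 2"
        using graph_finite_edges(2)[OF EG(1)] by (metis of_nat_le_iff of_nat_power)
      also have "\<dots> \<le> real N * real n powr (1 + \<alpha>)"
        using that assms(3) by (intro square_le_mult_powr) auto
      finally show ?thesis .
    qed
    moreover have "0 \<le> K * real n powr (1 + \<alpha>)" "0 \<le> real N * real n powr (1 + \<alpha>)"
      using \<open>C > 0\<close> unfolding K_def by simp_all
    ultimately show ?thesis
      unfolding EG(3) distrib_right by (cases "N \<le> n") (simp_all add: add_increasing add_increasing2)
  qed
  then show ?thesis
    by blast
qed

lemma ex_le_ex_glue:
  assumes "E \<noteq> {}" "s \<ge> 1"
  shows "ex n V E \<le> ex n (glueV V f s) (glueE E f s)"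
proof (rule ex_le_ex_if_subgraph)
  have "0 < s"
    using assms(2) by simp
  have gmap_0: "(\<lambda>v. (v, 0)) = gmap f 0"
    by (auto simp: gmap_def)
  show "(\<lambda>v. (v, 0)) ` V \<subseteq> glueV V f s"
    unfolding glueV_def gmap_0 using \<open>0 < s\<close> by blast
  show "\<forall>e\<in>E. (\<lambda>v. (v, 0)) ` e \<in> glueE E f s"
    unfolding glueE_def gmap_0 using \<open>0 < s\<close> by blast
qed (auto simp: inj_on_def assms(1))

theorem corollary1p11:
  fixes V :: "'a set" and E :: "'a set set" and f :: "'a set" and s :: nat and \<alpha> :: real
  assumes "graph V E" and "ES_good \<alpha> V E" and "0 \<le> \<alpha>" and "\<alpha> < 1"
    and "f \<in> E" and "s \<ge> 1"
  shows "\<exists>C::real. \<forall>n. ex n V E \<le> ex n (glueV V f s) (glueE E f s)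
            \<and> real (ex n (glueV V f s) (glueE E f s)) \<le> C * real n powr (1 + \<alpha>)"
proof -
  obtain C where "\<forall>n. real (ex n (glueV V f s) (glueE E f s)) \<le> C * real n powr (1 + \<alpha>)"
    using ex_glue_le_powr[OF assms(1-3,5,6)] by blast
  moreover have "\<forall>n. ex n V E \<le> ex n (glueV V f s) (glueE E f s)"
    using ex_le_ex_glue[OF _ assms(6)] assms(5) by blast
  ultimately show ?thesis
    by blast
qed

end
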